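(* Let $A$ be a JBW algebra, let $C$ be a maximal element of $ASU(A)$, and let $p\in C$ be a projection. Then $\dim U_p(C)=1$ if and only if $\dim U_p(A)=1$.
   Context: A JB algebra is a real Banach algebra $(A,\circ)$ with a commutative product satisfying $a\circ(b\circ a^2)=(a\circ b)\circ a^2$, $\|a^2\|\le\|a^2+b^2\|$, $\|a\|^2=\|a^2\|$; a JBW algebra is a JB algebra that is a dual Banach space (it has a unit $\mathbf{1}$). A projection is an element $p$ with $p\circ p=p$. For $a\in A$, $U_a:A\to A$ is $U_a(b)=2a\circ(a\circ b)-a^2\circ b$. $ASU(A)$ is the set of all norm-closed associative subalgebras of $A$ containing $\mathbf{1}$, ordered by inclusion; a maximal element is one not properly contained in another element of $ASU(A)$. *)

theory Defs
  imports "HOL-Analysis.Analysis"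
begin

(* A real Banach space 'a is a dual Banach space iff it is isometrically isomorphic
  to the dual of some Banach space X. We realize the predual X (canonically) as a
  norm-closed linear subspace of the dual 'a =>L real such that the evaluation map
  a |-> (f |-> f a) is an isometry from 'a onto the dual of X. *)
definition is_dual_banach :: "'a::banach itself \<Rightarrow> bool" where
  "is_dual_banach _ \<longleftrightarrow>
     (\<exists>X :: ('a \<Rightarrow>\<^sub>L real) set.
        subspace X \<and> closed X \<and>
        (\<forall>a::'a. norm a = (SUP f\<in>{f\<in>X. norm f \<le> 1}. \<bar>blinfun_apply f a\<bar>)) \<and>
        (\<forall>\<phi> :: ('a \<Rightarrow>\<^sub>L real) \<Rightarrow> real.
            ((\<forall>f\<in>X. \<forall>g\<in>X. \<phi> (f + g) = \<phi> f + \<phi> g) \<and>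
             (\<forall>c. \<forall>f\<in>X. \<phi> (c *\<^sub>R f) = c * \<phi> f) \<and>
             (\<exists>K. \<forall>f\<in>X. \<bar>\<phi> f\<bar> \<le> K * norm f))
            \<longrightarrow> (\<exists>a::'a. \<forall>f\<in>X. \<phi> f = blinfun_apply f a)))"

definition jb_algebra :: "('a::banach \<Rightarrow> 'a \<Rightarrow> 'a) \<Rightarrow> bool" where
  "jb_algebra m \<longleftrightarrow>
     bilinear m \<and>
     (\<forall>a b. norm (m a b) \<le> norm a * norm b) \<and>
     (\<forall>a b. m a b = m b a) \<and>
     (\<forall>a b. m a (m b (m a a)) = m (m a b) (m a a)) \<and>
     (\<forall>a b. norm (m a a) \<le> norm (m a a + m b b)) \<and>
     (\<forall>a. (norm a)\<^sup>2 = norm (m a a))"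

definition jordan_unit :: "('a \<Rightarrow> 'a \<Rightarrow> 'a) \<Rightarrow> 'a" where
  "jordan_unit m = (THE e. \<forall>a. m e a = a)"

(* JBW algebra: a JB algebra that is a dual Banach space (such an algebra has a unit). *)
definition jbw_algebra :: "('a::banach \<Rightarrow> 'a \<Rightarrow> 'a) \<Rightarrow> bool" where
  "jbw_algebra m \<longleftrightarrow> jb_algebra m \<and> is_dual_banach TYPE('a) \<and> (\<exists>e. \<forall>a. m e a = a)"

definition ASU :: "('a::banach \<Rightarrow> 'a \<Rightarrow> 'a) \<Rightarrow> 'a set set" where
  "ASU m = {C. subspace C \<and> (\<forall>x\<in>C. \<forall>y\<in>C. m x y \<in> C) \<and>
                (\<forall>x\<in>C. \<forall>y\<in>C. \<forall>z\<in>C. m (m x y) z = m x (m y z)) \<and>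
                closed C \<and> jordan_unit m \<in> C}"

definition maximal_ASU :: "('a::banach \<Rightarrow> 'a \<Rightarrow> 'a) \<Rightarrow> 'a set \<Rightarrow> bool" where
  "maximal_ASU m C \<longleftrightarrow> C \<in> ASU m \<and> \<not> (\<exists>D\<in>ASU m. C \<subset> D)"

definition Uop :: "('a::real_vector \<Rightarrow> 'a \<Rightarrow> 'a) \<Rightarrow> 'a \<Rightarrow> 'a \<Rightarrow> 'a" where
  "Uop m a b = 2 *\<^sub>R m a (m a b) - m (m a a) b"

end

theory Submission
  imports Defs
begin

text \<open>
  Suppose \<open>U\<^sub>p(C) = span {p}\<close>. Associativity of \<open>C\<close> gives \<open>p(pc) = pc\<close>, hence
  \<open>pc = U\<^sub>p c = \<lambda>(c) p\<close> for \<open>c \<in> C\<close>, and the Peirce decomposition shows that \<open>c\<close> acts on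
  the Peirce 1-space of \<open>p\<close> as the scalar \<open>\<lambda>(c)\<close>, with \<open>\<lambda>\<close> multiplicative. Every
  \<open>x = U\<^sub>p a\<close> lies in that Peirce 1-space, where the Jordan identity makes the powers of \<open>x\<close>
  (with unit \<open>p\<close>) associative. So the closed span of \<open>C\<close> and these powers is again a closed
  associative unital subalgebra; by maximality it is \<open>C\<close>, whence \<open>x = U\<^sub>p x \<in> span {p}\<close>.
  The other direction is just \<open>U\<^sub>p(C) \<subseteq> U\<^sub>p(A)\<close>.
\<close>

lemma subspace_dim_eq_1_iff:
  fixes p :: "'a::real_vector"
  assumes "subspace V" "p \<in> V" "p \<noteq> 0"
  shows "dim V = 1 \<longleftrightarrow> V = span {p}"
proof
  assume "dim V = 1"
  then have "\<exists>B. independent B \<and> span B = span V"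
    unfolding real_vector.dim_def by (auto split: if_splits)
  then obtain B where B: "independent B" "span B = span V" by blast
  with \<open>dim V = 1\<close> have "card B = 1" by (simp add: real_vector.dim_eq_card)
  then obtain v where v: "B = {v}" using card_1_singletonE by blast
  have V: "V = span {v}" using B(2) v assms(1) by (metis real_vector.span_eq_iff)
  have "p \<in> span {v}" using V assms(2) by simp
  then obtain c where c: "p = c *\<^sub>R v" by (auto simp: real_vector.span_singleton)
  with assms(3) have "v = inverse c *\<^sub>R p" by auto
  then have "v \<in> span {p}" by (simp add: real_vector.span_scale real_vector.span_base)
  then have "V \<subseteq> span {p}" using V by (simp add: real_vector.span_minimal)
  moreover have "span {p} \<subseteq> V" using assms(1,2) by (simp add: real_vector.span_minimal)
  ultimately show "V = span {p}" by blast
next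
  assume "V = span {p}"
  then show "dim V = 1"
    using assms(3) real_vector.dim_span_eq_card_independent[of "{p}"] by simp
qed

lemma image_closure_Times_subset:
  assumes "continuous_on UNIV f" "closed T" "f ` (A \<times> B) \<subseteq> T"
  shows "f ` (closure A \<times> closure B) \<subseteq> T"
  using image_closure_subset[of "A \<times> B" f T] assms
  by (simp add: closure_Times continuous_on_subset)

lemma bilinear_span_closed:
  assumes "bilinear f" "\<forall>u\<in>S. \<forall>v\<in>S. f u v \<in> span S" "u \<in> span S" "v \<in> span S"
  shows "f u v \<in> span S"
proof -
  note simps = bilinear_ladd[OF assms(1)] bilinear_radd[OF assms(1)] bilinear_lmul[OF assms(1)]
    bilinear_rmul[OF assms(1)] bilinear_lzero[OF assms(1)] bilinear_rzero[OF assms(1)]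
  have "f u' v \<in> span S" if "u' \<in> S" for u'
    using assms(4) by (induct rule: real_vector.span_induct_alt)
      (use assms(2) that in \<open>simp_all add: simps real_vector.span_add real_vector.span_scale
          real_vector.span_zero\<close>)
  with assms(3) show ?thesis by (induct rule: real_vector.span_induct_alt)
      (simp_all add: simps real_vector.span_add real_vector.span_scale real_vector.span_zero)
qed

lemma bilinear_span_assoc:
  assumes "bilinear f" "\<forall>u\<in>S. \<forall>v\<in>S. \<forall>w\<in>S. f (f u v) w = f u (f v w)"
    "u \<in> span S" "v \<in> span S" "w \<in> span S"
  shows "f (f u v) w = f u (f v w)"
proof -
  note simps = bilinear_ladd[OF assms(1)] bilinear_radd[OF assms(1)] bilinear_lmul[OF assms(1)]
    bilinear_rmul[OF assms(1)] bilinear_lzero[OF assms(1)] bilinear_rzero[OF assms(1)]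
  have w: "f (f u' v') w = f u' (f v' w)" if "u' \<in> S" "v' \<in> S" for u' v'
    using assms(5) by (induct rule: real_vector.span_induct_alt) (use assms(2) that in \<open>simp_all add: simps\<close>)
  have "f (f u' v) w = f u' (f v w)" if "u' \<in> S" for u'
    using assms(4) by (induct rule: real_vector.span_induct_alt) (use w that in \<open>simp_all add: simps\<close>)
  with assms(3) show ?thesis by (induct rule: real_vector.span_induct_alt) (simp_all add: simps)
qed

lemma closure_span_in_ASU:
  assumes m: "bounded_bilinear m" and "jordan_unit m \<in> S"
    and mult: "\<forall>u\<in>S. \<forall>v\<in>S. m u v \<in> span S"
    and assoc: "\<forall>u\<in>S. \<forall>v\<in>S. \<forall>w\<in>S. m (m u v) w = m u (m v w)"
  shows "closure (span S) \<in> ASU m"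
proof -
  have bil: "bilinear m"
    unfolding bilinear_def using bounded_bilinear.bounded_linear_left[OF m]
      bounded_bilinear.bounded_linear_right[OF m] bounded_linear.linear by blast
  note cont = bounded_bilinear.continuous_on[OF m]
  let ?D = "closure (span S)"
  have "(\<lambda>z. fst z + snd z) ` (span S \<times> span S) \<subseteq> ?D"
    using closure_subset real_vector.span_add by fastforce
  then have add: "(\<lambda>z. fst z + snd z) ` (?D \<times> ?D) \<subseteq> ?D"
    by (intro image_closure_Times_subset) (auto intro!: continuous_intros)
  have "(\<lambda>v. c *\<^sub>R v) ` span S \<subseteq> ?D" for c
    using closure_subset real_vector.span_scale by fastforce
  then have scale: "(\<lambda>v. c *\<^sub>R v) ` ?D \<subseteq> ?D" for c
    by (intro image_closure_subset) (auto intro!: continuous_intros)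
  have "(\<lambda>z. m (fst z) (snd z)) ` (span S \<times> span S) \<subseteq> ?D"
    using closure_subset bilinear_span_closed[OF bil mult] by fastforce
  then have mult_closed: "(\<lambda>z. m (fst z) (snd z)) ` (?D \<times> ?D) \<subseteq> ?D"
    by (intro image_closure_Times_subset) (auto intro!: continuous_intros cont)
  have "(\<lambda>(u, v, w). m (m u v) w - m u (m v w)) ` (span S \<times> (span S \<times> span S)) \<subseteq> {0}"
    using bilinear_span_assoc[OF bil assoc] by auto
  then have "(\<lambda>(u, v, w). m (m u v) w - m u (m v w)) ` (?D \<times> closure (span S \<times> span S)) \<subseteq> {0}"
    by (intro image_closure_Times_subset) (auto simp: case_prod_beta intro!: continuous_intros cont)
  then have assoc_closed: "\<forall>u\<in>?D. \<forall>v\<in>?D. \<forall>w\<in>?D. m (m u v) w = m u (m v w)"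
    by (auto simp: closure_Times image_subset_iff)
  have "0 \<in> ?D" using closure_subset real_vector.span_zero by blast
  with add scale have "subspace ?D"
    unfolding subspace_def image_subset_iff by auto
  moreover have "jordan_unit m \<in> ?D"
    using assms(2) closure_subset real_vector.span_base by blast
  ultimately show ?thesis
    using mult_closed assoc_closed unfolding ASU_def image_subset_iff by auto
qed

lemma doubling_recurrence_closed_form:
  fixes g :: "nat \<Rightarrow> 'a::real_vector"
  assumes "g 0 = 0" "\<And>i. i < N \<Longrightarrow> g (Suc i) = d + 2 *\<^sub>R g i" "i \<le> N"
  shows "g i = (2 ^ i - 1) *\<^sub>R d"
  using assms(3)
proof (induction i)
  case (Suc i)
  then have "g (Suc i) = d + 2 *\<^sub>R ((2 ^ i - 1) *\<^sub>R d)" using assms(2) by simp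
  also have "\<dots> = (1 + 2 * (2 ^ i - 1)) *\<^sub>R d" by (simp only: scaleR_add_left scaleR_one scaleR_scaleR)
  finally show ?case by (simp add: algebra_simps)
qed (simp add: assms(1))

lemma doubling_recurrence_vanishes:
  fixes g :: "nat \<Rightarrow> 'a::real_vector"
  assumes "g 0 = 0" "g N = 0" "\<And>i. i < N \<Longrightarrow> g (Suc i) = d + 2 *\<^sub>R g i" "i \<le> N"
  shows "g i = 0"
proof (cases "N = 0")
  case False
  have "(1::real) < 2 ^ N" using False by (simp add: one_less_power)
  then have "d = 0"
    using doubling_recurrence_closed_form[OF assms(1,3), of N] assms(2) by simp
  then show ?thesis using doubling_recurrence_closed_form[OF assms(1,3,4)] by simp
qed (use assms in simp)

text \<open>Below, \<open>m p y = y\<close> expresses that \<open>y\<close> lies in the Peirce 1-space of the idempotent \<open>p\<close>.\<close>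

locale jordan_algebra =
  fixes m :: "'a::real_vector \<Rightarrow> 'a \<Rightarrow> 'a"
  assumes bilinear: "bilinear m"
    and commute: "m a b = m b a"
    and jordan_identity: "m a (m b (m a a)) = m (m a b) (m a a)"
begin

lemmas mult_linear_simps =
  bilinear_ladd[OF bilinear] bilinear_radd[OF bilinear]
  bilinear_lmul[OF bilinear] bilinear_rmul[OF bilinear]
  bilinear_lsub[OF bilinear] bilinear_rsub[OF bilinear]
  bilinear_lneg[OF bilinear] bilinear_rneg[OF bilinear]
  bilinear_lzero[OF bilinear] bilinear_rzero[OF bilinear]

lemma jordan_identity_linearized:
  "m (m c b) (m a a) + 2 *\<^sub>R m (m a b) (m a c) = m c (m b (m a a)) + 2 *\<^sub>R m a (m b (m a c))"
proof -
  define F where "F u = m (m u b) (m u u) - m u (m b (m u u))" for u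
  have F0: "F u = 0" for u
    unfolding F_def using jordan_identity[of u b] commute by simp
  have "F (a + c) - F (a - c) - 2 *\<^sub>R F c =
     2 *\<^sub>R ((m (m c b) (m a a) + 2 *\<^sub>R m (m a b) (m a c)) - (m c (m b (m a a)) + 2 *\<^sub>R m a (m b (m a c))))"
    unfolding F_def by (simp add: mult_linear_simps algebra_simps commute scaleR_2)
  then show ?thesis using F0 by simp
qed

lemma idempotent_linearized:
  assumes "m p p = p"
  shows "m (m c b) p + 2 *\<^sub>R m (m p b) (m p c) = m c (m b p) + 2 *\<^sub>R m p (m b (m p c))"
  using jordan_identity_linearized[of c b p] assms by simp

lemma idempotent_peirce_polynomial:
  assumes "m p p = p"
  shows "2 *\<^sub>R (m p (m p (m p c)) - m p (m p c)) = m p (m p c) - m p c"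
proof -
  have "m (m c p) p + 2 *\<^sub>R m p (m p c) = m c p + 2 *\<^sub>R m p (m p (m p c))"
    using idempotent_linearized[OF assms, of c p] assms by simp
  then show ?thesis by (simp add: commute algebra_simps scaleR_2)
qed

lemma linear_Uop: "linear (Uop m p)"
  by (rule linearI) (simp_all add: Uop_def mult_linear_simps algebra_simps)

lemma Uop_in_peirce1:
  assumes "m p p = p"
  shows "m p (Uop m p a) = Uop m p a"
  using idempotent_peirce_polynomial[OF assms, of a] assms
  unfolding Uop_def by (simp add: mult_linear_simps algebra_simps scaleR_2)

lemma Uop_fixes_peirce1:
  assumes "m p p = p" "m p y = y"
  shows "Uop m p y = y"
  unfolding Uop_def using assms by (simp add: scaleR_2)

lemma span_idempotent_subset_Uop_image:
  assumes "subspace V" "p \<in> V" "m p p = p"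
  shows "span {p} \<subseteq> Uop m p ` V"
proof (rule real_vector.span_minimal)
  show "{p} \<subseteq> Uop m p ` V"
    using Uop_fixes_peirce1[OF assms(3,3)] assms(2) by (metis empty_subsetI image_eqI insert_subset)
  show "subspace (Uop m p ` V)"
    using assms(1) by (rule real_vector.linear_subspace_image[OF linear_Uop])
qed

lemma dim_Uop_image_eq_1_iff:
  assumes "subspace V" "p \<in> V" "m p p = p" "p \<noteq> 0"
  shows "dim (Uop m p ` V) = 1 \<longleftrightarrow> Uop m p ` V = span {p}"
  using subspace_dim_eq_1_iff[OF real_vector.linear_subspace_image[OF linear_Uop assms(1)] _ assms(4)]
    span_idempotent_subset_Uop_image[OF assms(1-3)] real_vector.span_base[of p "{p}"] by blast

lemma peirce1_mult:
  assumes "m p p = p" "m p y = y" "m p z = z"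
  shows "m p (m y z) = m y z"
  using idempotent_linearized[OF assms(1), of z y] assms by (simp add: commute algebra_simps scaleR_2)

lemma peirce1_mult_peirce0:
  assumes "m p p = p" "m p y = y" "m p z = 0"
  shows "m y z = 0"
proof -
  have "m p (m y z) = m y z"
    using idempotent_linearized[OF assms(1), of z y] assms
    by (simp add: commute mult_linear_simps algebra_simps scaleR_2)
  moreover have "m p (m y z) = 0"
    using idempotent_linearized[OF assms(1), of y z] assms
    by (simp add: commute mult_linear_simps algebra_simps scaleR_2)
  ultimately show ?thesis by simp
qed

lemma peirce1_scalar_action:
  assumes "m p p = p" "m p y = y" "m p (m p c) = m p c" "m p c = k *\<^sub>R p"
  shows "m c y = k *\<^sub>R y"
proof -
  have "m p (c - m p c) = 0" using assms(3) by (simp add: mult_linear_simps)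
  then have "m y (c - m p c) = 0" by (rule peirce1_mult_peirce0[OF assms(1,2)])
  then have "m c y = m (m p c) y" by (simp add: commute mult_linear_simps)
  also have "\<dots> = k *\<^sub>R y" using assms(2,4) by (simp add: mult_linear_simps)
  finally show ?thesis .
qed

end

text \<open>Powers of \<open>x\<close> taken in the Peirce 1-space of \<open>p\<close>, whose unit is \<open>p\<close>.\<close>

primrec peirce_pow :: "('a \<Rightarrow> 'a \<Rightarrow> 'a) \<Rightarrow> 'a \<Rightarrow> 'a \<Rightarrow> nat \<Rightarrow> 'a" where
  "peirce_pow m p x 0 = p"
| "peirce_pow m p x (Suc n) = m x (peirce_pow m p x n)"

context jordan_algebra
begin

lemma peirce_pow_peirce1:
  assumes "m p p = p" "m p x = x"
  shows "m p (peirce_pow m p x n) = peirce_pow m p x n"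
  by (induction n) (auto simp: assms peirce1_mult)

lemma peirce_pow_1:
  assumes "m p x = x"
  shows "peirce_pow m p x 1 = x"
  using assms commute by simp

text \<open>The linearized Jordan identity at \<open>a = x\<close>, \<open>b = x\<^sup>k\<close>, \<open>c = x\<^bsup>j+1\<^esup>\<close>.\<close>

lemma peirce_pow_defect_rec:
  fixes k j :: nat and p x :: 'a
  defines "P \<equiv> peirce_pow m p x"
  assumes "m p p = p" "m p x = x"
    and IH: "\<And>a b. a + b < k + j + 3 \<Longrightarrow> m (P a) (P b) = P (a + b)"
  shows "m (P (k + j + 1)) (P 2) + 2 *\<^sub>R m (P (k + 1)) (P (j + 2))
       = m (P (k + 2)) (P (j + 1)) + 2 *\<^sub>R P (k + j + 3)"
proof -
  have x2: "m x x = P 2"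
    using assms(3) commute[of x p] by (simp add: P_def numeral_2_eq_2)
  have "m (m (P (j + 1)) (P k)) (m x x) + 2 *\<^sub>R m (m x (P k)) (m x (P (j + 1)))
      = m (P (j + 1)) (m (P k) (m x x)) + 2 *\<^sub>R m x (m (P k) (m x (P (j + 1))))"
    by (rule jordan_identity_linearized)
  moreover have "m (P (j + 1)) (P k) = P (k + j + 1)" "m (P k) (P 2) = P (k + 2)"
    "m (P k) (P (j + 2)) = P (k + j + 2)"
    using IH[of "j + 1" k] IH[of k 2] IH[of k "j + 2"] by (simp_all add: algebra_simps)
  moreover have "m x (P k) = P (k + 1)" "m x (P (j + 1)) = P (j + 2)"
    "m x (P (k + j + 2)) = P (k + j + 3)"
    by (simp_all add: P_def eval_nat_numeral)
  ultimately show ?thesis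
    using commute[of "P (j + 1)" "P (k + 2)"] by (simp only: x2)
qed

lemma peirce_pow_add:
  assumes "m p p = p" "m p x = x"
  shows "m (peirce_pow m p x i) (peirce_pow m p x j) = peirce_pow m p x (i + j)"
proof (induction "i + j" arbitrary: i j rule: less_induct)
  case less
  let ?P = "peirce_pow m p x"
  consider "i = 0" | "j = 0" | "0 < i" "0 < j" by blast
  then show ?case
  proof cases
    case 1
    then show ?thesis using peirce_pow_peirce1[OF assms] by simp
  next
    case 2
    then show ?thesis using peirce_pow_peirce1[OF assms] commute by simp
  next
    case 3
    then obtain l where ij: "i + j = l + 2"
      by (metis add_2_eq_Suc' add_Suc_right less_imp_Suc_add add.commute)
    txt \<open>The defects \<open>g k\<close> of \<open>x\<^bsup>k+1\<^esup> x\<^bsup>l+1-k\<^esup>\<close> satisfy \<open>g (k+1) = d + 2 g k\<close> and vanish at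
      \<open>k = 0\<close> and \<open>k = l\<close>, so they all vanish.\<close>
    define g where "g k = m (?P (k + 1)) (?P (l + 1 - k)) - ?P (l + 2)" for k
    define d where "d = m (?P l) (?P 2) - ?P (l + 2)"
    have Pl: "m x (?P (l + 1)) = ?P (l + 2)" by (simp add: eval_nat_numeral)
    have g0: "g 0 = 0" unfolding g_def using Pl peirce_pow_1[OF assms(2)] by simp
    have gl: "g l = 0" unfolding g_def using Pl peirce_pow_1[OF assms(2)] commute[of x] by simp
    have rec: "g (Suc k) = d + 2 *\<^sub>R g k" if "k < l" for k
    proof -
      obtain r where l: "l = k + r + 1"
        using \<open>k < l\<close> by (metis add.commute add_Suc_right less_imp_Suc_add Suc_eq_plus1)
      have "m (?P (k + r + 1)) (?P 2) + 2 *\<^sub>R m (?P (k + 1)) (?P (r + 2))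
          = m (?P (k + 2)) (?P (r + 1)) + 2 *\<^sub>R ?P (k + r + 3)"
        by (rule peirce_pow_defect_rec[OF assms]) (use less l ij in simp)
      then show ?thesis
        by (simp add: g_def d_def l numeral_2_eq_2 numeral_3_eq_3 algebra_simps scaleR_2)
    qed
    have "i - 1 \<le> l" using 3 ij by linarith
    with g0 gl rec have "g (i - 1) = 0" by (rule doubling_recurrence_vanishes)
    moreover have "i - 1 + 1 = i" "l + 1 - (i - 1) = j" using 3 ij by simp_all
    ultimately show ?thesis unfolding g_def ij by (simp only: right_minus_eq)
  qed
qed

end

locale banach_jordan_algebra = jordan_algebra m for m :: "'a::banach \<Rightarrow> 'a \<Rightarrow> 'a" +
  assumes bounded_bilinear: "bounded_bilinear m"
begin

lemma ASU_extend_by_peirce1_powers: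
  assumes C: "C \<in> ASU m" and p: "p \<in> C" "m p p = p" "p \<noteq> 0"
    and pC: "\<forall>c\<in>C. m p c \<in> span {p}" and x: "m p x = x"
  shows "closure (span (C \<union> range (peirce_pow m p x))) \<in> ASU m"
proof -
  define Q where "Q = range (peirce_pow m p x)"
  have mulC: "m c c' \<in> C" if "c \<in> C" "c' \<in> C" for c c'
    using C that unfolding ASU_def by auto
  have asC: "m (m c c') c'' = m c (m c' c'')" if "c \<in> C" "c' \<in> C" "c'' \<in> C" for c c' c''
    using C that unfolding ASU_def by auto
  have unit: "jordan_unit m \<in> C" using C unfolding ASU_def by auto
  have "\<forall>c\<in>C. \<exists>k. m p c = k *\<^sub>R p" using pC by (auto simp: real_vector.span_singleton)
  then obtain l where l: "\<And>c. c \<in> C \<Longrightarrow> m p c = l c *\<^sub>R p" by metis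
  have Q1: "m p q = q" if "q \<in> Q" for q
    using that peirce_pow_peirce1[OF p(2) x] unfolding Q_def by auto
  have Qmul: "m q q' \<in> Q" if "q \<in> Q" "q' \<in> Q" for q q'
    using that peirce_pow_add[OF p(2) x] unfolding Q_def by auto
  have Qassoc: "m (m q q') q'' = m q (m q' q'')" if "q \<in> Q" "q' \<in> Q" "q'' \<in> Q" for q q' q''
    using that peirce_pow_add[OF p(2) x] unfolding Q_def by (auto simp: add.assoc)
  have act: "m c q = l c *\<^sub>R q" if "c \<in> C" "q \<in> Q" for c q
    using asC[OF p(1) p(1) that(1)] p(2) l[OF that(1)] Q1[OF that(2)]
    by (intro peirce1_scalar_action) simp_all
  have act': "m q c = l c *\<^sub>R q" if "c \<in> C" "q \<in> Q" for c q
    using act[OF that] commute by simp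
  have lmul: "l (m c c') = l c * l c'" if "c \<in> C" "c' \<in> C" for c c'
  proof -
    have "l (m c c') *\<^sub>R p = m (m p c) c'" using l[OF mulC[OF that]] asC[OF p(1) that] by simp
    also have "\<dots> = (l c * l c') *\<^sub>R p" using l that by (simp add: mult_linear_simps)
    finally show ?thesis using p(3) by simp
  qed
  have "k *\<^sub>R q \<in> span (C \<union> Q)" if "q \<in> Q" for k q
    using that by (simp add: real_vector.span_base real_vector.span_scale)
  then have "\<forall>u\<in>C \<union> Q. \<forall>v\<in>C \<union> Q. m u v \<in> span (C \<union> Q)"
    using mulC Qmul act act' by (auto intro: real_vector.span_base)
  moreover have "\<forall>u\<in>C \<union> Q. \<forall>v\<in>C \<union> Q. \<forall>w\<in>C \<union> Q. m (m u v) w = m u (m v w)"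
    using asC Qassoc by (auto simp: act act' lmul mulC Qmul mult_linear_simps)
  ultimately show ?thesis
    unfolding Q_def using closure_span_in_ASU[OF bounded_bilinear] unit by blast
qed

lemma maximal_ASU_Uop_range:
  assumes max: "maximal_ASU m C" and p: "p \<in> C" "m p p = p"
    and UC: "Uop m p ` C \<subseteq> span {p}"
  shows "range (Uop m p) \<subseteq> span {p}"
proof (cases "p = 0")
  case True
  then show ?thesis by (auto simp: Uop_def mult_linear_simps)
next
  case False
  have C: "C \<in> ASU m" and no_ext: "\<not> (\<exists>D\<in>ASU m. C \<subset> D)"
    using max unfolding maximal_ASU_def by auto
  have pC: "\<forall>c\<in>C. m p c \<in> span {p}"
  proof
    fix c assume "c \<in> C"
    with C p(1) have "m (m p p) c = m p (m p c)" unfolding ASU_def by blast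
    then have "m p (m p c) = m p c" using p(2) by simp
    then have "Uop m p c = m p c" using p(2) by (simp add: Uop_def scaleR_2)
    then show "m p c \<in> span {p}" using UC \<open>c \<in> C\<close> by (metis image_subset_iff)
  qed
  show ?thesis
  proof (rule image_subsetI)
    fix a
    define x where "x = Uop m p a"
    have x: "m p x = x" unfolding x_def using p(2) by (rule Uop_in_peirce1)
    define D where "D = closure (span (C \<union> range (peirce_pow m p x)))"
    have "D \<in> ASU m"
      unfolding D_def by (rule ASU_extend_by_peirce1_powers[OF C p False pC x])
    have sub_D: "C \<union> range (peirce_pow m p x) \<subseteq> D"
      unfolding D_def by (rule subset_trans[OF real_vector.span_superset closure_subset])
    with \<open>D \<in> ASU m\<close> have "D = C" using no_ext by blast
    moreover have "x \<in> D"
      using sub_D peirce_pow_1[OF x] by (metis UnCI rangeI subsetD)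
    ultimately have "Uop m p x \<in> span {p}" using UC by blast
    then show "Uop m p a \<in> span {p}" using Uop_fixes_peirce1[OF p(2) x] x_def by simp
  qed
qed

end

lemma jb_algebra_banach_jordan_algebra:
  assumes "jb_algebra m"
  shows "banach_jordan_algebra m"
proof -
  have "bounded_bilinear m"
    unfolding bounded_bilinear_def using assms unfolding jb_algebra_def
    by (auto simp: bilinear_ladd bilinear_radd bilinear_lmul bilinear_rmul intro!: exI[of _ 1])
  with assms show ?thesis
    unfolding banach_jordan_algebra_def banach_jordan_algebra_axioms_def jordan_algebra_def jb_algebra_def
    by blast
qed

theorem lemma2p4:
  fixes m :: "'a::banach \<Rightarrow> 'a \<Rightarrow> 'a" and C :: "'a set" and p :: 'a
  assumes "jbw_algebra m"
    and "maximal_ASU m C"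
    and "p \<in> C" and "m p p = p"
  shows "dim (Uop m p ` C) = 1 \<longleftrightarrow> dim (range (Uop m p)) = 1"
proof -
  interpret banach_jordan_algebra m
    using assms(1) jb_algebra_banach_jordan_algebra unfolding jbw_algebra_def by blast
  have C: "subspace C" using assms(2) unfolding maximal_ASU_def ASU_def by blast
  show ?thesis
  proof (cases "p = 0")
    case True
    then have "Uop m p ` C = {0}" "range (Uop m p) = {0}"
      using assms(3) by (auto simp: Uop_def mult_linear_simps)
    then show ?thesis by simp
  next
    case False
    have "Uop m p ` C \<subseteq> range (Uop m p)" by blast
    with maximal_ASU_Uop_range[OF assms(2-4)]
      span_idempotent_subset_Uop_image[OF C assms(3,4)]
      span_idempotent_subset_Uop_image[OF real_vector.subspace_UNIV _ assms(4)]
    have "Uop m p ` C = span {p} \<longleftrightarrow> range (Uop m p) = span {p}" by blast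
    with dim_Uop_image_eq_1_iff[OF C assms(3,4) False]
      dim_Uop_image_eq_1_iff[OF real_vector.subspace_UNIV _ assms(4) False]
    show ?thesis by simp
  qed
qed

end
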